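(* In the probabilistic Outcome Logic instance, let $C$ be a program (terminating after finitely many steps), $\varphi$ an outcome assertion, $A_1,\ldots,A_n$ state assertions that are pairwise disjoint (for $i\neq j$ no state satisfies $A_i\land A_j$), $p_1,\ldots,p_n\in[0,1]$, and $A_0=\bigwedge_{i=1}^n\lnot A_i$. Then $\not\vDash\langle\varphi\rangle\,C\,\langle\bigoplus_{i=1}^n(\mathbb{P}[A_i]=p_i)\rangle$ iff there exist $q_0,\ldots,q_n\in[0,1]$ and an outcome assertion $\varphi'$ with $\varphi'\Rightarrow\varphi$ and $\mathsf{sat}(\varphi')$ such that $\vDash\langle\varphi'\rangle\,C\,\langle\bigoplus_{i=0}^n(\mathbb{P}[A_i]=q_i)\rangle$ and either $q_0\neq0$ or $q_i\neq p_i$ for some $i\in\{1,\ldots,n\}$.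
   Context: A subdistribution on a countable set $X$ is $\mu\colon X\to[0,1]$ with mass $|\mu|=\sum_x\mu(x)\le1$; $\mathsf{supp}(\mu)=\{x:\mu(x)>0\}$; $\varnothing$ is the zero subdistribution; $\mu_1+\mu_2$ is pointwise sum, defined iff $|\mu_1|+|\mu_2|\le1$. Probabilistic execution model: $\mathsf{bind}(\mu,k)=\sum_{x\in\mathsf{supp}(\mu)}\mu(x)\cdot k(x)$, $\mathsf{unit}(x)=\delta_x$ (Dirac), monoid $(+,\varnothing)$. Program states are variable stores $\sigma\colon\mathsf{Var}\to\mathsf{Val}$. Atomic commands: $\mathsf{assume}\ e$ ($\delta_\sigma$ if $e$ true in $\sigma$, else $\varnothing$), $x:=e$, and sampling $x\,{\leftarrow}\,\eta$ for finitely supported $\eta$ on values, with $[\![x\leftarrow\eta]\!](\sigma)=\mathsf{bind}(\eta,\lambda v.[\![x:=v]\!](\sigma))$. Programs are built with $\mathbb{0},\mathbb{1}$, sequencing ($[\![C_1;C_2]\!](\sigma)=\mathsf{bind}([\![C_1]\!](\sigma),[\![C_2]\!])$), and choice and iteration only in the guarded forms $\mathsf{if}\ e\ \mathsf{then}\ C_1\ \mathsf{else}\ C_2=(\mathsf{assume}\ e;C_1)+(\mathsf{assume}\ \lnot e;C_2)$ and $\mathsf{while}\ e\ \mathsf{do}\ C=(\mathsf{assume}\ e;C)^\star;\mathsf{assume}\ \lnot e$, where $+$ is interpreted by $+$ on subdistributions and $C^\star$ as the least fixed point of $f\mapsto\lambda\sigma.f^\dagger([\![C]\!](\sigma))+\delta_\sigma$,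 $f^\dagger(\mu)=\mathsf{bind}(\mu,f)$. State assertions $A$ have a relation $\sigma\vDash A$ and are closed under $\land,\lnot$. Atomic outcome assertions are $\mathbb{P}[A]=p$, with $\mu\vDash\mathbb{P}[A]=p$ iff $|\mu|=p$ and every $\sigma\in\mathsf{supp}(\mu)$ satisfies $A$. Outcome assertions are built with $\top,\bot,\top^\oplus$ ($\mu\vDash\top^\oplus$ iff $\mu=\varnothing$), classical $\land,\Rightarrow$, and $\oplus$ ($\mu\vDash\varphi\oplus\psi$ iff $\mu=\mu_1+\mu_2$ with $\mu_1\vDash\varphi$, $\mu_2\vDash\psi$). $\vDash\langle\varphi\rangle C\langle\psi\rangle$ iff every $\mu\vDash\varphi$ has $[\![C]\!]^\dagger(\mu)\vDash\psi$. $\varphi'\Rightarrow\varphi$ means every $\mu$ satisfying $\varphi'$ satisfies $\varphi$; $\mathsf{sat}(\varphi')$ means some $\mu$ satisfies $\varphi'$. *)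

theory Defs
  imports "HOL-Probability.Probability_Mass_Function"
begin

section \<open>Subdistributions (values in ennreal, so that lfp is available)\<close>

type_synonym ('x,'v) state = "'x \<Rightarrow> 'v"
type_synonym 'a sd = "'a \<Rightarrow> ennreal"

definition mass :: "'a sd \<Rightarrow> ennreal" where
  "mass \<mu> = (\<Sum>\<^sub>\<infinity>x. \<mu> x)"

definition subdist :: "'a sd \<Rightarrow> bool" where
  "subdist \<mu> \<longleftrightarrow> mass \<mu> \<le> 1"

definition szero :: "'a sd" where
  "szero = (\<lambda>_. 0)"

definition splus :: "'a sd \<Rightarrow> 'a sd \<Rightarrow> 'a sd" where
  "splus \<mu>1 \<mu>2 = (\<lambda>x. \<mu>1 x + \<mu>2 x)"

definition dirac :: "'a \<Rightarrow> 'a sd" where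
  "dirac x = (\<lambda>y. if y = x then 1 else 0)"

definition sbind :: "'a sd \<Rightarrow> ('a \<Rightarrow> 'b sd) \<Rightarrow> 'b sd" where
  "sbind \<mu> k = (\<lambda>y. \<Sum>\<^sub>\<infinity>x. \<mu> x * k x y)"

datatype ('x,'v) cmd =
    CZero
  | COne
  | CAssume "('x,'v) state \<Rightarrow> bool"
  | CAssign 'x "('x,'v) state \<Rightarrow> 'v"
  | CSample 'x "'v pmf"
  | CSeq "('x,'v) cmd" "('x,'v) cmd"
  | CIf "('x,'v) state \<Rightarrow> bool" "('x,'v) cmd" "('x,'v) cmd"
  | CWhile "('x,'v) state \<Rightarrow> bool" "('x,'v) cmd"

definition sassume :: "('a \<Rightarrow> bool) \<Rightarrow> 'a \<Rightarrow> 'a sd" where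
  "sassume e \<sigma> = (if e \<sigma> then dirac \<sigma> else szero)"

definition star_F :: "('a \<Rightarrow> 'a sd) \<Rightarrow> ('a \<Rightarrow> 'a sd) \<Rightarrow> ('a \<Rightarrow> 'a sd)" where
  "star_F c f = (\<lambda>\<sigma>. splus (sbind (c \<sigma>) f) (dirac \<sigma>))"

text \<open>None: the true semantics (least fixed point); Some N: every loop cut off
  after N Kleene iterations (used only to define termination).\<close>
definition star_sem :: "nat option \<Rightarrow> ('a \<Rightarrow> 'a sd) \<Rightarrow> ('a \<Rightarrow> 'a sd)" where
  "star_sem m c = (case m of None \<Rightarrow> lfp (star_F c)
                     | Some N \<Rightarrow> ((star_F c) ^^ N) (\<lambda>_. szero))"

primrec den :: "nat option \<Rightarrow> ('x,'v) cmd \<Rightarrow> ('x,'v) state \<Rightarrow> ('x,'v) state sd" where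
  "den m CZero \<sigma> = szero"
| "den m COne \<sigma> = dirac \<sigma>"
| "den m (CAssume e) \<sigma> = sassume e \<sigma>"
| "den m (CAssign x e) \<sigma> = dirac (\<sigma>(x := e \<sigma>))"
| "den m (CSample x \<eta>) \<sigma> = sbind (\<lambda>v. ennreal (pmf \<eta> v)) (\<lambda>v. dirac (\<sigma>(x := v)))"
| "den m (CSeq c1 c2) \<sigma> = sbind (den m c1 \<sigma>) (den m c2)"
| "den m (CIf e c1 c2) \<sigma> =
     splus (sbind (sassume e \<sigma>) (den m c1)) (sbind (sassume (\<lambda>s. \<not> e s) \<sigma>) (den m c2))"
| "den m (CWhile e c) \<sigma> =
     sbind (star_sem m (\<lambda>s. sbind (sassume e s) (den m c)) \<sigma>) (sassume (\<lambda>s. \<not> e s))"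

definition sem :: "('x,'v) cmd \<Rightarrow> ('x,'v) state \<Rightarrow> ('x,'v) state sd" where
  "sem c = den None c"

primrec wf_cmd :: "('x,'v) cmd \<Rightarrow> bool" where
  "wf_cmd CZero = True"
| "wf_cmd COne = True"
| "wf_cmd (CAssume e) = True"
| "wf_cmd (CAssign x e) = True"
| "wf_cmd (CSample x \<eta>) = finite (set_pmf \<eta>)"
| "wf_cmd (CSeq c1 c2) = (wf_cmd c1 \<and> wf_cmd c2)"
| "wf_cmd (CIf e c1 c2) = (wf_cmd c1 \<and> wf_cmd c2)"
| "wf_cmd (CWhile e c) = wf_cmd c"

definition terminating :: "('x,'v) cmd \<Rightarrow> bool" where
  "terminating c \<longleftrightarrow> (\<forall>\<sigma>. \<exists>N. den (Some N) c \<sigma> = sem c \<sigma>)"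

datatype 'a oassn =
    OTop
  | OBot
  | OTopPlus
  | OAnd "'a oassn" "'a oassn"
  | OImp "'a oassn" "'a oassn"
  | OPlus "'a oassn" "'a oassn"
  | OProb "'a \<Rightarrow> bool" real

primrec osat :: "'a sd \<Rightarrow> 'a oassn \<Rightarrow> bool" where
  "osat \<mu> OTop = True"
| "osat \<mu> OBot = False"
| "osat \<mu> OTopPlus = (\<mu> = szero)"
| "osat \<mu> (OAnd \<phi> \<psi>) = (osat \<mu> \<phi> \<and> osat \<mu> \<psi>)"
| "osat \<mu> (OImp \<phi> \<psi>) = (osat \<mu> \<phi> \<longrightarrow> osat \<mu> \<psi>)"
| "osat \<mu> (OPlus \<phi> \<psi>) = (\<exists>\<mu>1 \<mu>2. subdist \<mu>1 \<and> subdist \<mu>2 \<and> \<mu> = splus \<mu>1 \<mu>2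
                               \<and> osat \<mu>1 \<phi> \<and> osat \<mu>2 \<psi>)"
| "osat \<mu> (OProb A p) = (0 \<le> p \<and> mass \<mu> = ennreal p \<and> (\<forall>\<sigma>. \<mu> \<sigma> \<noteq> 0 \<longrightarrow> A \<sigma>))"

fun big_oplus :: "'a oassn list \<Rightarrow> 'a oassn" where
  "big_oplus [] = OTopPlus"
| "big_oplus [\<phi>] = \<phi>"
| "big_oplus (\<phi> # \<psi>s) = OPlus \<phi> (big_oplus \<psi>s)"

definition ol_valid :: "('x,'v) state oassn \<Rightarrow> ('x,'v) cmd \<Rightarrow> ('x,'v) state oassn \<Rightarrow> bool" where
  "ol_valid \<phi> c \<psi> \<longleftrightarrow> (\<forall>\<mu>. subdist \<mu> \<longrightarrow> osat \<mu> \<phi> \<longrightarrow> osat (sbind \<mu> (sem c)) \<psi>)"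

definition oentails :: "'a oassn \<Rightarrow> 'a oassn \<Rightarrow> bool" where
  "oentails \<phi>' \<phi> \<longleftrightarrow> (\<forall>\<mu>. subdist \<mu> \<longrightarrow> osat \<mu> \<phi>' \<longrightarrow> osat \<mu> \<phi>)"

definition satisfiable :: "'a oassn \<Rightarrow> bool" where
  "satisfiable \<phi> \<longleftrightarrow> (\<exists>\<mu>. subdist \<mu> \<and> osat \<mu> \<phi>)"

end

(*
  The easy direction: an input satisfying the satisfiable refinement phi' also satisfies phi,
  and its output has cell masses q, which differ from (0, p_1, ..., p_n); so the output violates
  the original postcondition.

  Conversely, take an input mu satisfying phi whose output violates the postcondition; since
  A_0, ..., A_n partition the states, some cell A_i receives the wrong mass.  The truth values
  of the finitely many state predicates occurring in phi split the states into finitely many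
  fibres, and whether a subdistribution satisfies phi depends only on its fibre masses.
  Concentrating each fibre of mu on a single representative state therefore preserves phi.
  The output mass of A_i is linear in the input, so some choice of representatives keeps the
  wrong mass: otherwise that mass would not depend on the representatives, hence the output
  mass of A_i per unit of input would be constant on each fibre, and mu itself would give the
  right mass.  The resulting finitely supported input is characterised exactly by an outcome
  assertion psi, and phi' = OAnd phi psi fixes the output completely, which yields q.
*)

theory Submission
  imports Defs
begin

section \<open>Sums of ennreal-valued functions\<close>

text \<open>The library fact \<open>summable_on_ennreal\<close> is stated only for functions of the form
  \<open>ennreal_of_enat \<circ> f\<close>.\<close>

lemma summable_on_ennreal_fun [simp]: "(f :: 'a \<Rightarrow> ennreal) summable_on A"
  by (simp add: nonneg_summable_on_complete)

lemma infsum_ennreal_single_le: "f x \<le> infsum (f :: 'a \<Rightarrow> ennreal) UNIV"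
  using infsum_mono_neutral[of f "{x}" f UNIV] by simp

lemma infsum_ennreal_eq_0_iff: "infsum (f :: 'a \<Rightarrow> ennreal) UNIV = 0 \<longleftrightarrow> (\<forall>x. f x = 0)"
  by (metis infsum_0 infsum_ennreal_single_le le_zero_eq)

lemma infsum_ennreal_finite_support:
  "finite F \<Longrightarrow> (\<And>x. x \<notin> F \<Longrightarrow> f x = 0) \<Longrightarrow> infsum (f :: 'a \<Rightarrow> ennreal) UNIV = sum f F"
  by (subst infsum_cong_neutral[where T = F and g = f]) auto

lemma infsum_ennreal_single_support:
  "(\<And>y. y \<noteq> x \<Longrightarrow> f y = 0) \<Longrightarrow> infsum (f :: 'a \<Rightarrow> ennreal) UNIV = f x"
  using infsum_ennreal_finite_support[of "{x}" f] by auto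

lemma countable_support_if_infsum_finite:
  fixes f :: "'a \<Rightarrow> ennreal"
  assumes "infsum f UNIV < \<infinity>"
  shows "countable {x. f x \<noteq> 0}"
proof -
  define L where "L m = {x. ennreal (inverse (Suc m)) \<le> f x}" for m :: nat
  have "finite (L m)" for m
  proof (rule ccontr)
    assume "infinite (L m)"
    then have "infsum f (L m) = \<infinity>"
      by (intro infsum_superconst_infinite_ennreal[where b = "ennreal (inverse (Suc m))"])
        (auto simp: L_def)
    moreover have "infsum f (L m) \<le> infsum f UNIV"
      by (rule infsum_mono_neutral) auto
    ultimately show False
      using assms by (simp add: top_unique)
  qed
  moreover have "{x. f x \<noteq> 0} \<subseteq> (\<Union>m. L m)"
  proof
    fix x assume "x \<in> {x. f x \<noteq> 0}"
    then have "0 < f x" by (simp add: zero_less_iff_neq_zero)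
    show "x \<in> (\<Union>m. L m)"
    proof (cases "f x")
      case (real r)
      with \<open>0 < f x\<close> have "0 < r" by auto
      then obtain m where "inverse (real (Suc m)) < r" using reals_Archimedean by blast
      then show ?thesis using real by (auto simp: L_def intro!: ennreal_leI less_imp_le)
    qed (auto simp: L_def)
  qed
  ultimately show ?thesis
    by (meson countable_UN countable_finite countable_subset UNIV_I countableI_type)
qed

lemma sum_le_infsum_ennreal:
  assumes "finite F"
  shows "sum f F \<le> infsum (f :: 'a \<Rightarrow> ennreal) UNIV"
proof -
  have "infsum f F \<le> infsum f UNIV"
    by (rule infsum_mono_neutral) auto
  then show ?thesis using assms by simp
qed

lemma infsum_ennreal_le_nn_integral:
  fixes f :: "'a \<Rightarrow> ennreal"
  shows "infsum f UNIV \<le> (\<integral>\<^sup>+x. f x \<partial>count_space UNIV)"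
proof -
  have "sum f F \<le> (\<integral>\<^sup>+x. f x \<partial>count_space UNIV)" if "finite F" for F
  proof -
    have "sum f F = (\<integral>\<^sup>+x. f x \<partial>count_space F)"
      using that by (simp add: nn_integral_count_space_finite)
    also have "\<dots> = (\<integral>\<^sup>+x. f x * indicator F x \<partial>count_space UNIV)"
      by (rule nn_integral_count_space_indicator) simp
    also have "\<dots> \<le> (\<integral>\<^sup>+x. f x \<partial>count_space UNIV)"
      by (intro nn_integral_mono) (auto split: split_indicator)
    finally show ?thesis .
  qed
  then show ?thesis
    by (subst nonneg_infsum_complete) (auto intro: SUP_least)
qed

lemma nn_integral_le_infsum_ennreal:
  fixes f :: "'a \<Rightarrow> ennreal"
  shows "(\<integral>\<^sup>+x. f x \<partial>count_space UNIV) \<le> infsum f UNIV"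
proof (cases "infsum f UNIV < \<infinity>")
  case True
  define S where "S = {x. f x \<noteq> 0}"
  have "countable S"
    unfolding S_def using True by (rule countable_support_if_infsum_finite)
  have on_S: "(\<integral>\<^sup>+x. f x \<partial>count_space UNIV) = (\<integral>\<^sup>+x. f x \<partial>count_space S)"
    by (rule nn_integral_count_space_eq) (auto simp: S_def)
  show ?thesis
  proof (cases "finite S")
    case True
    then show ?thesis
      using on_S sum_le_infsum_ennreal[of S f] by (simp add: nn_integral_count_space_finite)
  next
    case False
    define g where "g = from_nat_into S"
    have bij: "bij_betw g UNIV S"
      unfolding g_def using bij_betw_from_nat_into \<open>countable S\<close> False by blast
    have "(\<integral>\<^sup>+x. f x \<partial>count_space S) = (\<Sum>n. f (g n))"
      by (simp add: nn_integral_bij_count_space[symmetric, OF bij] nn_integral_count_space_nat)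
    also have "\<dots> = (SUP n. \<Sum>i<n. f (g i))" by (rule suminf_eq_SUP)
    also have "\<dots> \<le> infsum f UNIV"
    proof (rule SUP_least)
      fix n :: nat
      have "inj g" using bij by (simp add: bij_betw_def)
      then have "(\<Sum>i<n. f (g i)) = sum f (g ` {..<n})"
        by (simp add: sum.reindex[OF inj_on_subset])
      then show "(\<Sum>i<n. f (g i)) \<le> infsum f UNIV" using sum_le_infsum_ennreal[of "g ` {..<n}" f] by simp
    qed
    finally show ?thesis using on_S by simp
  qed
qed (simp add: less_top[symmetric])

text \<open>\<open>ennreal\<close> is not a uniform space, so the library's Fubini theorem \<open>infsum_swap\<close> does not
  apply; the counting-measure integral provides it instead.\<close>

lemma infsum_ennreal_eq_nn_integral: "infsum f UNIV = (\<integral>\<^sup>+x. f x \<partial>count_space UNIV)"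
  by (rule antisym[OF infsum_ennreal_le_nn_integral nn_integral_le_infsum_ennreal])

lemma infsum_ennreal_cmult: "infsum (\<lambda>x. c * f x) UNIV = c * infsum (f :: 'a \<Rightarrow> ennreal) UNIV"
  by (simp add: infsum_ennreal_eq_nn_integral nn_integral_cmult)

lemma infsum_ennreal_swap:
  fixes f :: "'a \<Rightarrow> 'b \<Rightarrow> ennreal"
  shows "infsum (\<lambda>x. infsum (f x) UNIV) UNIV = infsum (\<lambda>y. infsum (\<lambda>x. f x y) UNIV) UNIV"
proof -
  have "infsum (\<lambda>x. infsum (f x) UNIV) UNIV
      = (\<integral>\<^sup>+x. \<integral>\<^sup>+y. case_prod f (x, y) \<partial>count_space UNIV \<partial>count_space UNIV)"
    by (simp add: infsum_ennreal_eq_nn_integral)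
  also have "\<dots> = (\<integral>\<^sup>+y. \<integral>\<^sup>+x. case_prod f (x, y) \<partial>count_space UNIV \<partial>count_space UNIV)"
    by (simp only: nn_integral_fst_count_space nn_integral_snd_count_space)
  also have "\<dots> = infsum (\<lambda>y. infsum (\<lambda>x. f x y) UNIV) UNIV"
    by (simp add: infsum_ennreal_eq_nn_integral)
  finally show ?thesis .
qed

section \<open>Subdistributions and terminating programs\<close>

definition srestr :: "'a sd \<Rightarrow> ('a \<Rightarrow> bool) \<Rightarrow> 'a sd" where
  "srestr \<mu> P = (\<lambda>\<sigma>. if P \<sigma> then \<mu> \<sigma> else 0)"

lemma mass_dirac [simp]: "mass (dirac x) = 1"
  unfolding mass_def dirac_def by (subst infsum_ennreal_single_support[of x]) auto

lemma mass_szero [simp]: "mass szero = 0"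
  unfolding mass_def szero_def by simp

lemma mass_splus: "mass (splus \<mu>1 \<mu>2) = mass \<mu>1 + mass \<mu>2"
  unfolding mass_def splus_def by (simp add: infsum_add)

lemma mass_sbind: "mass (sbind \<mu> k) = infsum (\<lambda>x. \<mu> x * mass (k x)) UNIV"
  unfolding mass_def sbind_def by (subst infsum_ennreal_swap) (simp add: infsum_ennreal_cmult)

lemma sbind_dirac: "sbind (dirac x) k = k x"
  unfolding sbind_def dirac_def by (intro ext, subst infsum_ennreal_single_support[of x]) auto

lemma sbind_szero: "sbind szero k = szero"
  unfolding sbind_def szero_def by simp

lemma sbind_sassume: "sbind (sassume e x) k = (if e x then k x else szero)"
  by (simp add: sassume_def sbind_dirac sbind_szero)

lemma srestr_sbind: "srestr (sbind \<mu> k) P = sbind \<mu> (\<lambda>x. srestr (k x) P)"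
  unfolding srestr_def sbind_def by auto

lemma mass_srestr_sbind:
  "mass (srestr (sbind \<mu> k) P) = infsum (\<lambda>x. \<mu> x * mass (srestr (k x) P)) UNIV"
  by (simp add: srestr_sbind mass_sbind)

lemma mass_sbind_sassume: "mass (sbind \<mu> (sassume P)) = mass (srestr \<mu> P)"
proof -
  have "\<mu> x * mass (sassume P x) = srestr \<mu> P x" for x
    by (simp add: sassume_def srestr_def)
  then show ?thesis by (simp add: mass_sbind mass_def[of "srestr \<mu> P"])
qed

lemma mass_mono: "(\<And>x. \<mu> x \<le> \<nu> x) \<Longrightarrow> mass \<mu> \<le> mass \<nu>"
  unfolding mass_def by (rule infsum_mono) auto

lemma mass_srestr_le: "mass (srestr \<mu> P) \<le> mass \<mu>"
  by (rule mass_mono) (simp add: srestr_def)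

lemma subdist_srestr: "subdist \<mu> \<Longrightarrow> subdist (srestr \<mu> P)"
  unfolding subdist_def using mass_srestr_le order_trans by blast

lemma mass_sbind_le: "(\<And>x. mass (k x) \<le> 1) \<Longrightarrow> mass (sbind \<mu> k) \<le> mass \<mu>"
  unfolding mass_sbind by (subst mass_def[of \<mu>]) (rule infsum_mono, auto intro: mult_left_le)

lemma subdist_sbind: "subdist \<mu> \<Longrightarrow> (\<And>x. mass (k x) \<le> 1) \<Longrightarrow> subdist (sbind \<mu> k)"
  unfolding subdist_def using mass_sbind_le order_trans by blast

lemma mass_point_srestr: "mass (srestr \<mu> (\<lambda>\<sigma>. \<sigma> = x)) = \<mu> x"
  unfolding mass_def srestr_def by (subst infsum_ennreal_single_support[of x]) auto

text \<open>The unfoldings of a loop themselves may have mass above 1, since every unfolding adds a Dirac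
  at the current state; only their part that exits the loop is a subdistribution.\<close>

lemma mass_loop_unfolding_exit_le:
  assumes body: "\<And>\<sigma>. mass (c \<sigma>) \<le> 1"
  shows "mass (srestr ((star_F (\<lambda>\<sigma>. sbind (sassume e \<sigma>) c) ^^ N) (\<lambda>_. szero) \<sigma>) (\<lambda>s. \<not> e s)) \<le> 1"
proof (induction N arbitrary: \<sigma>)
  case 0
  then show ?case by (simp add: srestr_def szero_def mass_def)
next
  case (Suc N)
  define f where "f = (star_F (\<lambda>\<sigma>. sbind (sassume e \<sigma>) c) ^^ N) (\<lambda>_. szero)"
  have unfold: "(star_F (\<lambda>\<sigma>. sbind (sassume e \<sigma>) c) ^^ Suc N) (\<lambda>_. szero) \<sigma>
      = splus (sbind (sbind (sassume e \<sigma>) c) f) (dirac \<sigma>)"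
    by (simp add: f_def star_F_def)
  show ?case
  proof (cases "e \<sigma>")
    case True
    then have "srestr (splus (sbind (sbind (sassume e \<sigma>) c) f) (dirac \<sigma>)) (\<lambda>s. \<not> e s)
        = srestr (sbind (c \<sigma>) f) (\<lambda>s. \<not> e s)"
      by (auto simp: srestr_def splus_def dirac_def sbind_sassume)
    then have "mass (srestr ((star_F (\<lambda>\<sigma>. sbind (sassume e \<sigma>) c) ^^ Suc N) (\<lambda>_. szero) \<sigma>) (\<lambda>s. \<not> e s))
        = infsum (\<lambda>\<tau>. c \<sigma> \<tau> * mass (srestr (f \<tau>) (\<lambda>s. \<not> e s))) UNIV"
      unfolding unfold by (simp add: mass_srestr_sbind)
    also have "\<dots> \<le> mass (c \<sigma>)"
      unfolding mass_def[of "c \<sigma>"] by (rule infsum_mono) (use Suc.IH in \<open>auto simp: f_def intro: mult_left_le\<close>)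
    also have "\<dots> \<le> 1" by (rule body)
    finally show ?thesis .
  next
    case False
    then have "srestr (splus (sbind (sbind (sassume e \<sigma>) c) f) (dirac \<sigma>)) (\<lambda>s. \<not> e s) = dirac \<sigma>"
      by (simp add: sbind_sassume sbind_szero) (auto simp: srestr_def splus_def dirac_def szero_def)
    then show ?thesis unfolding unfold by simp
  qed
qed

lemma mass_pmf_le: "mass (\<lambda>v. ennreal (pmf \<eta> v)) \<le> 1"
  unfolding mass_def infsum_ennreal_eq_nn_integral
  by (simp add: nn_integral_pmf measure_pmf.emeasure_le_1)

lemma mass_den_bounded_le: "mass (den (Some N) c \<sigma>) \<le> 1"
proof (induction c arbitrary: \<sigma>)
  case (CSample x \<eta>)
  have "mass (den (Some N) (CSample x \<eta>) \<sigma>) \<le> mass (\<lambda>v. ennreal (pmf \<eta> v))"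
    by simp (rule mass_sbind_le, simp)
  also have "\<dots> \<le> 1" by (rule mass_pmf_le)
  finally show ?case .
next
  case (CSeq c1 c2)
  have "mass (den (Some N) (CSeq c1 c2) \<sigma>) \<le> mass (den (Some N) c1 \<sigma>)"
    by simp (rule mass_sbind_le, rule CSeq.IH(2))
  also have "\<dots> \<le> 1" by (rule CSeq.IH(1))
  finally show ?case .
next
  case (CWhile e c)
  show ?case
    using mass_loop_unfolding_exit_le[where c = "den (Some N) c", OF CWhile.IH]
    by (simp add: star_sem_def mass_sbind_sassume)
next
  case CIf
  then show ?case by (simp add: mass_splus sbind_sassume)
qed (simp_all add: sassume_def)

lemma mass_sem_le: "terminating c \<Longrightarrow> mass (sem c \<sigma>) \<le> 1"
  unfolding terminating_def by (metis mass_den_bounded_le)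

section \<open>Sums of probability atoms over disjoint predicates\<close>

lemma osat_OPlus_OProb_disjoint:
  assumes disj: "\<And>m \<sigma>. subdist m \<Longrightarrow> osat m \<psi> \<Longrightarrow> m \<sigma> \<noteq> 0 \<Longrightarrow> \<not> B \<sigma>"
    and "subdist \<nu>"
  shows "osat \<nu> (OPlus (OProb B r) \<psi>) \<longleftrightarrow>
    0 \<le> r \<and> mass (srestr \<nu> B) = ennreal r \<and> osat (srestr \<nu> (\<lambda>\<sigma>. \<not> B \<sigma>)) \<psi>"
proof
  assume "osat \<nu> (OPlus (OProb B r) \<psi>)"
  then obtain \<nu>1 \<nu>2 where "subdist \<nu>2" and \<nu>: "\<nu> = splus \<nu>1 \<nu>2"
    and \<nu>1: "0 \<le> r" "mass \<nu>1 = ennreal r" "\<forall>\<sigma>. \<nu>1 \<sigma> \<noteq> 0 \<longrightarrow> B \<sigma>" and \<nu>2: "osat \<nu>2 \<psi>"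
    by auto
  with disj have "srestr \<nu> B = \<nu>1" and "srestr \<nu> (\<lambda>\<sigma>. \<not> B \<sigma>) = \<nu>2"
    by (fastforce simp: srestr_def splus_def)+
  with \<nu>1 \<nu>2 show "0 \<le> r \<and> mass (srestr \<nu> B) = ennreal r \<and> osat (srestr \<nu> (\<lambda>\<sigma>. \<not> B \<sigma>)) \<psi>"
    by simp
next
  assume "0 \<le> r \<and> mass (srestr \<nu> B) = ennreal r \<and> osat (srestr \<nu> (\<lambda>\<sigma>. \<not> B \<sigma>)) \<psi>"
  moreover have "\<nu> = splus (srestr \<nu> B) (srestr \<nu> (\<lambda>\<sigma>. \<not> B \<sigma>))"
    by (auto simp: srestr_def splus_def)
  moreover have "\<forall>\<sigma>. srestr \<nu> B \<sigma> \<noteq> 0 \<longrightarrow> B \<sigma>"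
    by (simp add: srestr_def)
  ultimately show "osat \<nu> (OPlus (OProb B r) \<psi>)"
    unfolding osat.simps using subdist_srestr[OF \<open>subdist \<nu>\<close>]
    by (intro exI[of _ "srestr \<nu> B"] exI[of _ "srestr \<nu> (\<lambda>\<sigma>. \<not> B \<sigma>)"]) simp
qed

lemma osat_big_oplus_disjoint:
  assumes "distinct js" and "\<forall>i\<in>set js. \<forall>j\<in>set js. i \<noteq> j \<longrightarrow> (\<forall>\<sigma>. \<not> (B i \<sigma> \<and> B j \<sigma>))"
    and "subdist \<nu>"
  shows "osat \<nu> (big_oplus (map (\<lambda>j. OProb (B j) (r j)) js)) \<longleftrightarrow>
    (\<forall>\<sigma>. \<nu> \<sigma> \<noteq> 0 \<longrightarrow> (\<exists>j\<in>set js. B j \<sigma>)) \<and>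
    (\<forall>j\<in>set js. 0 \<le> r j \<and> mass (srestr \<nu> (B j)) = ennreal (r j))"
  using assms
proof (induction js arbitrary: \<nu>)
  case Nil
  then show ?case by (auto simp: szero_def)
next
  case (Cons j js)
  have "j \<notin> set js" and "distinct js" using Cons.prems(1) by auto
  have disj: "\<forall>i\<in>set js. \<forall>\<sigma>. B i \<sigma> \<longrightarrow> \<not> B j \<sigma>"
    using Cons.prems(2) \<open>j \<notin> set js\<close> by auto
  note IH = Cons.IH[OF \<open>distinct js\<close> _ subdist_srestr[OF Cons.prems(3)]]
  show ?case
  proof (cases js)
    case Nil
    have "(\<forall>\<sigma>. \<nu> \<sigma> \<noteq> 0 \<longrightarrow> B j \<sigma>) \<Longrightarrow> srestr \<nu> (B j) = \<nu>"
      by (auto simp: srestr_def fun_eq_iff)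
    with Nil show ?thesis by auto
  next
    case (Cons j' js')
    let ?\<psi> = "big_oplus (map (\<lambda>j. OProb (B j) (r j)) js)"
    have "big_oplus (map (\<lambda>j. OProb (B j) (r j)) (j # js)) = OPlus (OProb (B j) (r j)) ?\<psi>"
      using Cons by simp
    moreover have "\<not> B j \<sigma>" if "subdist m" "osat m ?\<psi>" "m \<sigma> \<noteq> 0" for m \<sigma>
      using Cons.IH[OF \<open>distinct js\<close> _ that(1)] Cons.prems(2) that(2,3) disj by auto
    moreover have "srestr (srestr \<nu> (\<lambda>\<sigma>. \<not> B j \<sigma>)) (B i) = srestr \<nu> (B i)" if "i \<in> set js" for i
      using disj that by (auto simp: srestr_def)
    ultimately show ?thesis
      using osat_OPlus_OProb_disjoint[OF _ Cons.prems(3)] IH Cons.prems(2)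
      by (auto simp: srestr_def)
  qed
qed

definition partition_cell :: "(nat \<Rightarrow> 'a \<Rightarrow> bool) \<Rightarrow> nat \<Rightarrow> nat \<Rightarrow> 'a \<Rightarrow> bool" where
  "partition_cell A n i = (if i = 0 then (\<lambda>\<sigma>. \<forall>j\<in>{1..n}. \<not> A j \<sigma>) else A i)"

lemma osat_partition_cells_iff:
  assumes disj: "\<forall>i\<in>{1..n}. \<forall>j\<in>{1..n}. i \<noteq> j \<longrightarrow> (\<forall>\<sigma>. \<not> (A i \<sigma> \<and> A j \<sigma>))"
    and "subdist \<nu>"
  shows "osat \<nu> (big_oplus (map (\<lambda>i. OProb (partition_cell A n i) (q i)) [0..<n+1])) \<longleftrightarrow>
    (\<forall>i\<in>{0..n}. 0 \<le> q i \<and> mass (srestr \<nu> (partition_cell A n i)) = ennreal (q i))"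
proof -
  have "\<forall>i\<in>{0..n}. \<forall>j\<in>{0..n}. i \<noteq> j \<longrightarrow> (\<forall>\<sigma>. \<not> (partition_cell A n i \<sigma> \<and> partition_cell A n j \<sigma>))"
    using disj by (auto simp: partition_cell_def Ball_def Suc_le_eq)
  moreover have "\<exists>i\<in>{0..n}. partition_cell A n i \<sigma>" for \<sigma>
  proof (cases "\<exists>j\<in>{1..n}. A j \<sigma>")
    case True
    then obtain j where "j \<in> {1..n}" "A j \<sigma>" by blast
    then show ?thesis by (intro bexI[of _ j]) (auto simp: partition_cell_def)
  qed (auto simp: partition_cell_def)
  moreover have "set [0..<n+1] = {0..n}" by auto
  ultimately show ?thesis
    using osat_big_oplus_disjoint[of "[0..<n+1]" "partition_cell A n" \<nu> q] \<open>subdist \<nu>\<close>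
    by (simp only: distinct_upt) blast
qed

lemma osat_family_iff_partition_masses:
  assumes disj: "\<forall>i\<in>{1..n}. \<forall>j\<in>{1..n}. i \<noteq> j \<longrightarrow> (\<forall>\<sigma>. \<not> (A i \<sigma> \<and> A j \<sigma>))"
    and p: "\<forall>i\<in>{1..n}. 0 \<le> p i" and "subdist \<nu>"
  shows "osat \<nu> (big_oplus (map (\<lambda>i. OProb (A i) (p i)) [1..<n+1])) \<longleftrightarrow>
    (\<forall>i\<in>{0..n}. mass (srestr \<nu> (partition_cell A n i)) = (if i = 0 then 0 else ennreal (p i)))"
proof -
  have "set [1..<n+1] = {1..n}" by auto
  then have "osat \<nu> (big_oplus (map (\<lambda>i. OProb (A i) (p i)) [1..<n+1])) \<longleftrightarrow>
    (\<forall>\<sigma>. \<nu> \<sigma> \<noteq> 0 \<longrightarrow> (\<exists>j\<in>{1..n}. A j \<sigma>)) \<and>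
    (\<forall>i\<in>{1..n}. mass (srestr \<nu> (A i)) = ennreal (p i))"
    using osat_big_oplus_disjoint[of "[1..<n+1]" A \<nu> p] disj p \<open>subdist \<nu>\<close> by auto
  moreover have "mass (srestr \<nu> (partition_cell A n 0)) = 0 \<longleftrightarrow> (\<forall>\<sigma>. \<nu> \<sigma> \<noteq> 0 \<longrightarrow> (\<exists>j\<in>{1..n}. A j \<sigma>))"
    unfolding mass_def infsum_ennreal_eq_0_iff by (auto simp: srestr_def partition_cell_def)
  moreover have "{0..n} = insert 0 {1..n}" by auto
  ultimately show ?thesis
    by (simp add: partition_cell_def)
qed

section \<open>Fibres of a subdistribution\<close>

definition fibre_mass :: "('a \<Rightarrow> 'k) \<Rightarrow> 'a sd \<Rightarrow> 'k \<Rightarrow> ennreal" where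
  "fibre_mass K \<mu> k = mass (srestr \<mu> (\<lambda>\<sigma>. K \<sigma> = k))"

lemma fibre_mass_scale: "fibre_mass K (\<lambda>\<sigma>. \<mu> \<sigma> * h (K \<sigma>)) k = fibre_mass K \<mu> k * h k"
proof -
  have "srestr (\<lambda>\<sigma>. \<mu> \<sigma> * h (K \<sigma>)) (\<lambda>\<sigma>. K \<sigma> = k) = (\<lambda>\<sigma>. h k * srestr \<mu> (\<lambda>\<sigma>. K \<sigma> = k) \<sigma>)"
    by (auto simp: srestr_def fun_eq_iff mult.commute)
  then show ?thesis
    by (simp add: fibre_mass_def mass_def infsum_ennreal_cmult mult.commute)
qed

lemma fibre_mass_splus: "fibre_mass K (splus \<mu>1 \<mu>2) k = fibre_mass K \<mu>1 k + fibre_mass K \<mu>2 k"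
proof -
  have "srestr (splus \<mu>1 \<mu>2) (\<lambda>\<sigma>. K \<sigma> = k)
      = splus (srestr \<mu>1 (\<lambda>\<sigma>. K \<sigma> = k)) (srestr \<mu>2 (\<lambda>\<sigma>. K \<sigma> = k))"
    by (auto simp: srestr_def splus_def)
  then show ?thesis by (simp add: fibre_mass_def mass_splus)
qed

lemma fibre_mass_less_top: "subdist \<mu> \<Longrightarrow> fibre_mass K \<mu> k < top"
  unfolding fibre_mass_def subdist_def
  using mass_srestr_le[of \<mu> "\<lambda>\<sigma>. K \<sigma> = k"] ennreal_one_less_top by (metis order_trans le_less_trans)

lemma le_fibre_mass: "\<mu> \<sigma> \<le> fibre_mass K \<mu> (K \<sigma>)"
  unfolding fibre_mass_def mass_def
  using infsum_ennreal_single_le[of "srestr \<mu> (\<lambda>\<tau>. K \<tau> = K \<sigma>)" \<sigma>] by (simp add: srestr_def)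

lemma fibre_mass_eq_0_iff: "fibre_mass K \<mu> k = 0 \<longleftrightarrow> (\<forall>\<sigma>. K \<sigma> = k \<longrightarrow> \<mu> \<sigma> = 0)"
  unfolding fibre_mass_def mass_def infsum_ennreal_eq_0_iff by (auto simp: srestr_def)

lemma mass_eq_infsum_fibre_mass: "mass \<mu> = infsum (fibre_mass K \<mu>) UNIV"
proof -
  have "fibre_mass K \<mu> = (\<lambda>k. infsum (\<lambda>\<sigma>. if K \<sigma> = k then \<mu> \<sigma> else 0) UNIV)"
    by (simp add: fun_eq_iff fibre_mass_def mass_def srestr_def)
  then have "infsum (fibre_mass K \<mu>) UNIV
      = infsum (\<lambda>k. infsum (\<lambda>\<sigma>. if K \<sigma> = k then \<mu> \<sigma> else 0) UNIV) UNIV"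
    by simp
  also have "\<dots> = infsum (\<lambda>\<sigma>. infsum (\<lambda>k. if K \<sigma> = k then \<mu> \<sigma> else 0) UNIV) UNIV"
    by (rule infsum_ennreal_swap)
  also have "\<dots> = infsum \<mu> UNIV"
  proof -
    have "infsum (\<lambda>k. if K \<sigma> = k then \<mu> \<sigma> else 0) UNIV = \<mu> \<sigma>" for \<sigma>
      by (subst infsum_ennreal_single_support[where x = "K \<sigma>"]) auto
    then show ?thesis by simp
  qed
  finally show ?thesis by (simp add: mass_def)
qed

lemma infsum_mult_fibre_fun:
  "infsum (\<lambda>\<sigma>. \<mu> \<sigma> * h (K \<sigma>)) UNIV = infsum (\<lambda>k. fibre_mass K \<mu> k * h k) UNIV"
proof -
  have "fibre_mass K (\<lambda>\<sigma>. \<mu> \<sigma> * h (K \<sigma>)) = (\<lambda>k. fibre_mass K \<mu> k * h k)"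
    by (simp add: fun_eq_iff fibre_mass_scale)
  then show ?thesis
    using mass_eq_infsum_fibre_mass[of "\<lambda>\<sigma>. \<mu> \<sigma> * h (K \<sigma>)" K] by (simp add: mass_def)
qed

lemma fibre_mass_share:
  assumes "fibre_mass K \<nu> k \<le> fibre_mass K \<mu> k" and "fibre_mass K \<mu> k \<noteq> top"
  shows "fibre_mass K (\<lambda>\<sigma>. \<mu> \<sigma> * (fibre_mass K \<nu> (K \<sigma>) / fibre_mass K \<mu> (K \<sigma>))) k = fibre_mass K \<nu> k"
proof -
  have "fibre_mass K (\<lambda>\<sigma>. \<mu> \<sigma> * (fibre_mass K \<nu> (K \<sigma>) / fibre_mass K \<mu> (K \<sigma>))) k
      = fibre_mass K \<mu> k * (fibre_mass K \<nu> k / fibre_mass K \<mu> k)"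
    by (rule fibre_mass_scale[where K = K and \<mu> = \<mu> and h = "\<lambda>k. fibre_mass K \<nu> k / fibre_mass K \<mu> k"])
  also have "\<dots> = fibre_mass K \<nu> k"
    using assms by (cases "fibre_mass K \<mu> k = 0")
      (simp_all add: ennreal_times_divide mult.commute[of "fibre_mass K \<mu> k"] ennreal_mult_divide_eq)
  finally show ?thesis .
qed

lemma fibre_mass_split:
  assumes fm: "fibre_mass K \<mu> = fibre_mass K (splus \<mu>1 \<mu>2)" and "subdist \<mu>"
  obtains \<mu>1' \<mu>2' where "\<mu> = splus \<mu>1' \<mu>2'" "subdist \<mu>1'" "subdist \<mu>2'"
    "fibre_mass K \<mu>1' = fibre_mass K \<mu>1" "fibre_mass K \<mu>2' = fibre_mass K \<mu>2"
proof -
  define c where "c = fibre_mass K \<mu>"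
  have c_sum: "c k = fibre_mass K \<mu>1 k + fibre_mass K \<mu>2 k" for k
    by (simp add: c_def fm fibre_mass_splus)
  have c_finite: "c k \<noteq> top" for k
    using fibre_mass_less_top[OF \<open>subdist \<mu>\<close>] by (simp add: c_def less_top)
  \<comment> \<open>each fibre of \<open>\<mu>\<close> is shared in the proportions in which \<open>\<mu>1\<close> and \<open>\<mu>2\<close> share it\<close>
  define share where "share \<nu> = (\<lambda>\<sigma>. \<mu> \<sigma> * (fibre_mass K \<nu> (K \<sigma>) / c (K \<sigma>)))" for \<nu>
  have share_fibre_mass: "fibre_mass K (share \<nu>) = fibre_mass K \<nu>" if "\<nu> = \<mu>1 \<or> \<nu> = \<mu>2" for \<nu>
  proof
    fix k
    have "fibre_mass K \<nu> k \<le> c k" using that c_sum[of k] by auto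
    then show "fibre_mass K (share \<nu>) k = fibre_mass K \<nu> k"
      unfolding share_def c_def using c_finite[of k, unfolded c_def] by (rule fibre_mass_share)
  qed
  have split: "\<mu> = splus (share \<mu>1) (share \<mu>2)"
  proof
    fix \<sigma>
    show "\<mu> \<sigma> = splus (share \<mu>1) (share \<mu>2) \<sigma>"
    proof (cases "c (K \<sigma>) = 0")
      case True
      then have "\<mu> \<sigma> = 0" using le_fibre_mass[of \<mu> \<sigma> K] by (simp add: c_def)
      then show ?thesis by (simp add: splus_def share_def)
    next
      case False
      then have "fibre_mass K \<mu>1 (K \<sigma>) / c (K \<sigma>) + fibre_mass K \<mu>2 (K \<sigma>) / c (K \<sigma>) = 1"
        using c_finite[of "K \<sigma>"]
        by (simp add: add_divide_distrib_ennreal[symmetric] c_sum[symmetric] less_top)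
      then show ?thesis by (simp add: splus_def share_def distrib_left[symmetric])
    qed
  qed
  have "subdist (share \<nu>)" if "\<nu> = \<mu>1 \<or> \<nu> = \<mu>2" for \<nu>
  proof -
    have "share \<nu> \<sigma> \<le> \<mu> \<sigma>" for \<sigma>
      using that by (subst split) (auto simp: splus_def)
    then have "mass (share \<nu>) \<le> mass \<mu>" by (rule mass_mono)
    then show ?thesis using \<open>subdist \<mu>\<close> by (simp add: subdist_def)
  qed
  with split share_fibre_mass that show ?thesis by blast
qed

lemma supported_iff_if_fibre_mass_eq:
  assumes fm: "fibre_mass K \<mu> = fibre_mass K \<mu>'" and A: "\<forall>\<sigma> \<tau>. K \<sigma> = K \<tau> \<longrightarrow> A \<sigma> = A \<tau>"
  shows "(\<forall>\<sigma>. \<mu> \<sigma> \<noteq> 0 \<longrightarrow> A \<sigma>) \<longleftrightarrow> (\<forall>\<sigma>. \<mu>' \<sigma> \<noteq> 0 \<longrightarrow> A \<sigma>)"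
proof -
  have transfer: "A \<sigma>"
    if "fibre_mass K m = fibre_mass K m'" and "\<forall>\<sigma>. m \<sigma> \<noteq> 0 \<longrightarrow> A \<sigma>" and "m' \<sigma> \<noteq> 0" for m m' \<sigma>
  proof -
    have "fibre_mass K m (K \<sigma>) \<noteq> 0"
      using le_fibre_mass[of m' \<sigma> K] that(1,3) by auto
    then obtain \<tau> where "K \<tau> = K \<sigma>" and "m \<tau> \<noteq> 0"
      by (auto simp: fibre_mass_eq_0_iff)
    with that(2) A show "A \<sigma>" by metis
  qed
  show ?thesis using transfer[OF fm] transfer[OF fm[symmetric]] by blast
qed

primrec oassn_preds :: "'a oassn \<Rightarrow> ('a \<Rightarrow> bool) list" where
  "oassn_preds OTop = []"
| "oassn_preds OBot = []"
| "oassn_preds OTopPlus = []"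
| "oassn_preds (OAnd \<phi> \<psi>) = oassn_preds \<phi> @ oassn_preds \<psi>"
| "oassn_preds (OImp \<phi> \<psi>) = oassn_preds \<phi> @ oassn_preds \<psi>"
| "oassn_preds (OPlus \<phi> \<psi>) = oassn_preds \<phi> @ oassn_preds \<psi>"
| "oassn_preds (OProb A p) = [A]"

lemma osat_fibre_invariant:
  assumes "\<forall>B\<in>set (oassn_preds \<phi>). \<forall>\<sigma> \<tau>. K \<sigma> = K \<tau> \<longrightarrow> B \<sigma> = B \<tau>"
    and "subdist \<mu>" and "subdist \<mu>'" and "fibre_mass K \<mu> = fibre_mass K \<mu>'"
  shows "osat \<mu> \<phi> \<longleftrightarrow> osat \<mu>' \<phi>"
  using assms
proof (induction \<phi> arbitrary: \<mu> \<mu>')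
  case OTopPlus
  have "(\<forall>\<sigma>. \<mu> \<sigma> \<noteq> 0 \<longrightarrow> False) \<longleftrightarrow> (\<forall>\<sigma>. \<mu>' \<sigma> \<noteq> 0 \<longrightarrow> False)"
    using OTopPlus.prems(4) by (rule supported_iff_if_fibre_mass_eq) simp
  then show ?case by (simp add: szero_def fun_eq_iff)
next
  case (OProb A p)
  have "mass \<mu> = mass \<mu>'"
    using OProb.prems(4) mass_eq_infsum_fibre_mass[of \<mu> K] mass_eq_infsum_fibre_mass[of \<mu>' K] by simp
  moreover have "\<forall>\<sigma> \<tau>. K \<sigma> = K \<tau> \<longrightarrow> A \<sigma> = A \<tau>"
    by (rule bspec[OF OProb.prems(1)]) simp
  then have "(\<forall>\<sigma>. \<mu> \<sigma> \<noteq> 0 \<longrightarrow> A \<sigma>) \<longleftrightarrow> (\<forall>\<sigma>. \<mu>' \<sigma> \<noteq> 0 \<longrightarrow> A \<sigma>)"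
    by (rule supported_iff_if_fibre_mass_eq[OF OProb.prems(4)])
  ultimately show ?case by simp
next
  case (OPlus \<phi> \<psi>)
  have preds: "\<forall>B\<in>set (oassn_preds \<phi>). \<forall>\<sigma> \<tau>. K \<sigma> = K \<tau> \<longrightarrow> B \<sigma> = B \<tau>"
    "\<forall>B\<in>set (oassn_preds \<psi>). \<forall>\<sigma> \<tau>. K \<sigma> = K \<tau> \<longrightarrow> B \<sigma> = B \<tau>"
    using OPlus.prems(1) by simp_all
  have plus_transfer: "osat m' (OPlus \<phi> \<psi>)"
    if "subdist m'" and fm: "fibre_mass K m = fibre_mass K m'" and "osat m (OPlus \<phi> \<psi>)" for m m'
  proof -
    obtain m1 m2 where "subdist m1" "subdist m2" "m = splus m1 m2" "osat m1 \<phi>" "osat m2 \<psi>"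
      using \<open>osat m (OPlus \<phi> \<psi>)\<close> by auto
    then have "fibre_mass K m' = fibre_mass K (splus m1 m2)" using fm by simp
    then obtain m1' m2' where "m' = splus m1' m2'" "subdist m1'" "subdist m2'"
      "fibre_mass K m1' = fibre_mass K m1" "fibre_mass K m2' = fibre_mass K m2"
      by (rule fibre_mass_split[OF _ \<open>subdist m'\<close>])
    moreover have "osat m1' \<phi>"
      using OPlus.IH(1)[OF preds(1) \<open>subdist m1\<close> \<open>subdist m1'\<close>] calculation \<open>osat m1 \<phi>\<close> by simp
    moreover have "osat m2' \<psi>"
      using OPlus.IH(2)[OF preds(2) \<open>subdist m2\<close> \<open>subdist m2'\<close>] calculation \<open>osat m2 \<psi>\<close> by simp
    ultimately show ?thesis unfolding osat.simps by blast
  qed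
  show ?case
    using plus_transfer[OF OPlus.prems(3,4)] plus_transfer[OF OPlus.prems(2) OPlus.prems(4)[symmetric]]
    by blast
next
  case (OAnd \<phi> \<psi>)
  show ?case
    using OAnd.IH(1)[OF _ OAnd.prems(2-4)] OAnd.IH(2)[OF _ OAnd.prems(2-4)] OAnd.prems(1) by simp
next
  case (OImp \<phi> \<psi>)
  show ?case
    using OImp.IH(1)[OF _ OImp.prems(2-4)] OImp.IH(2)[OF _ OImp.prems(2-4)] OImp.prems(1) by simp
qed simp_all

section \<open>Finitely supported counterexamples\<close>

lemma sum_choice_invariant_imp_eq:
  fixes w :: "'k \<Rightarrow> ennreal" and G :: "'a \<Rightarrow> ennreal"
  assumes "finite I" and "k \<in> I" and "x \<in> R k" and "y \<in> R k" and "\<forall>i\<in>I. R i \<noteq> {}"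
    and "w k \<noteq> 0" and "\<forall>i\<in>I. w i < top" and "\<forall>\<sigma>. G \<sigma> < top"
    and invariant: "\<And>ch. \<forall>i\<in>I. ch i \<in> R i \<Longrightarrow> (\<Sum>i\<in>I. w i * G (ch i)) = T"
  shows "G x = G y"
proof -
  define ch where "ch = (\<lambda>i. SOME z. z \<in> R i)"
  have ch: "\<forall>i\<in>I. ch i \<in> R i"
    unfolding ch_def using assms(5) by (simp add: some_in_eq)
  define rest where "rest = (\<Sum>i\<in>I - {k}. w i * G (ch i))"
  have "rest < top"
    unfolding rest_def using assms(1,7,8) by (simp add: ennreal_mult_less_top)
  have "(\<Sum>i\<in>I. w i * G ((ch(k := z)) i)) = w k * G z + rest" for z
    unfolding rest_def sum.remove[OF \<open>finite I\<close> \<open>k \<in> I\<close>] by (auto intro: sum.cong)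
  moreover have "\<forall>i\<in>I. (ch(k := z)) i \<in> R i" if "z \<in> R k" for z
    using ch that by simp
  ultimately have "w k * G x + rest = w k * G y + rest"
    using invariant \<open>x \<in> R k\<close> \<open>y \<in> R k\<close> by metis
  then have "w k * G x = w k * G y"
    using \<open>rest < top\<close> by (auto simp: ennreal_add_left_cancel add.commute)
  then show ?thesis
    using assms(2,6,7) by (auto simp: ennreal_mult_cancel_left)
qed

definition concentrate :: "('a \<Rightarrow> 'k) \<Rightarrow> 'a sd \<Rightarrow> ('k \<Rightarrow> 'a) \<Rightarrow> 'a sd" where
  "concentrate K \<mu> ch =
    (\<lambda>\<sigma>. if fibre_mass K \<mu> (K \<sigma>) \<noteq> 0 \<and> \<sigma> = ch (K \<sigma>) then fibre_mass K \<mu> (K \<sigma>) else 0)"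

lemma fibre_mass_concentrate:
  assumes "\<forall>k. fibre_mass K \<mu> k \<noteq> 0 \<longrightarrow> K (ch k) = k"
  shows "fibre_mass K (concentrate K \<mu> ch) = fibre_mass K \<mu>"
proof
  fix k
  show "fibre_mass K (concentrate K \<mu> ch) k = fibre_mass K \<mu> k"
  proof (cases "fibre_mass K \<mu> k = 0")
    case True
    then have "\<forall>\<sigma>. K \<sigma> = k \<longrightarrow> concentrate K \<mu> ch \<sigma> = 0"
      by (simp add: concentrate_def)
    then have "fibre_mass K (concentrate K \<mu> ch) k = 0"
      by (simp only: fibre_mass_eq_0_iff)
    with True show ?thesis by simp
  next
    case False
    then have "K (ch k) = k" using assms by blast
    have "fibre_mass K (concentrate K \<mu> ch) k = srestr (concentrate K \<mu> ch) (\<lambda>\<sigma>. K \<sigma> = k) (ch k)"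
      unfolding fibre_mass_def mass_def
      by (rule infsum_ennreal_single_support) (auto simp: srestr_def concentrate_def)
    also have "\<dots> = fibre_mass K \<mu> k"
      using \<open>K (ch k) = k\<close> False by (simp add: srestr_def concentrate_def)
    finally show ?thesis .
  qed
qed

lemma subdist_concentrate:
  assumes "\<forall>k. fibre_mass K \<mu> k \<noteq> 0 \<longrightarrow> K (ch k) = k" and "subdist \<mu>"
  shows "subdist (concentrate K \<mu> ch)"
  using assms by (simp add: subdist_def mass_eq_infsum_fibre_mass[of _ K] fibre_mass_concentrate)

lemma support_concentrate: "{\<sigma>. concentrate K \<mu> ch \<sigma> \<noteq> 0} \<subseteq> ch ` {k. fibre_mass K \<mu> k \<noteq> 0}"
  by (auto simp: concentrate_def)

lemma infsum_concentrate:
  assumes "\<forall>k. fibre_mass K \<mu> k \<noteq> 0 \<longrightarrow> K (ch k) = k" and "finite {k. fibre_mass K \<mu> k \<noteq> 0}"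
  shows "infsum (\<lambda>\<sigma>. concentrate K \<mu> ch \<sigma> * G \<sigma>) UNIV
    = (\<Sum>k | fibre_mass K \<mu> k \<noteq> 0. fibre_mass K \<mu> k * G (ch k))"
proof -
  let ?KS = "{k. fibre_mass K \<mu> k \<noteq> 0}"
  have "inj_on ch ?KS"
    using assms(1) by (metis (mono_tags, lifting) inj_onI mem_Collect_eq)
  have "infsum (\<lambda>\<sigma>. concentrate K \<mu> ch \<sigma> * G \<sigma>) UNIV = (\<Sum>\<sigma>\<in>ch ` ?KS. concentrate K \<mu> ch \<sigma> * G \<sigma>)"
    using support_concentrate[of K \<mu> ch] assms(2)
    by (intro infsum_ennreal_finite_support) auto
  also have "\<dots> = (\<Sum>k\<in>?KS. concentrate K \<mu> ch (ch k) * G (ch k))"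
    by (simp add: sum.reindex[OF \<open>inj_on ch ?KS\<close>])
  also have "\<dots> = (\<Sum>k\<in>?KS. fibre_mass K \<mu> k * G (ch k))"
    using assms(1) by (intro sum.cong) (auto simp: concentrate_def)
  finally show ?thesis .
qed

lemma infsum_eq_if_choice_invariant:
  fixes \<mu> :: "'a sd" and G :: "'a \<Rightarrow> ennreal"
  assumes "subdist \<mu>" and "finite {k. fibre_mass K \<mu> k \<noteq> 0}" and "\<forall>\<sigma>. G \<sigma> < top"
    and invariant: "\<And>ch. (\<And>k. fibre_mass K \<mu> k \<noteq> 0 \<Longrightarrow> K (ch k) = k \<and> \<mu> (ch k) \<noteq> 0) \<Longrightarrow>
      (\<Sum>k | fibre_mass K \<mu> k \<noteq> 0. fibre_mass K \<mu> k * G (ch k)) = T"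
  shows "infsum (\<lambda>\<sigma>. \<mu> \<sigma> * G \<sigma>) UNIV = T"
proof -
  define KS where "KS = {k. fibre_mass K \<mu> k \<noteq> 0}"
  define R where "R k = {\<sigma>. K \<sigma> = k \<and> \<mu> \<sigma> \<noteq> 0}" for k
  have R_nonempty: "\<forall>k\<in>KS. R k \<noteq> {}"
    by (auto simp: KS_def R_def fibre_mass_eq_0_iff)
  have invariant': "(\<Sum>k\<in>KS. fibre_mass K \<mu> k * G (ch k)) = T" if "\<forall>k\<in>KS. ch k \<in> R k" for ch
    unfolding KS_def by (rule invariant) (use that in \<open>auto simp: KS_def R_def\<close>)
  define ch where "ch k = (SOME \<sigma>. \<sigma> \<in> R k)" for k
  have ch: "\<forall>k\<in>KS. ch k \<in> R k"
    using R_nonempty by (simp add: ch_def some_in_eq)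
  have "\<mu> \<sigma> * G \<sigma> = \<mu> \<sigma> * G (ch (K \<sigma>))" for \<sigma>
  proof (cases "\<mu> \<sigma> = 0")
    case False
    then have "K \<sigma> \<in> KS" and "\<sigma> \<in> R (K \<sigma>)"
      using le_fibre_mass[of \<mu> \<sigma> K] by (auto simp: KS_def R_def)
    moreover have "fibre_mass K \<mu> (K \<sigma>) \<noteq> 0"
      using \<open>K \<sigma> \<in> KS\<close> by (simp add: KS_def)
    moreover have "\<forall>k\<in>KS. fibre_mass K \<mu> k < top"
      by (simp add: fibre_mass_less_top[OF \<open>subdist \<mu>\<close>])
    ultimately have "G \<sigma> = G (ch (K \<sigma>))"
      using sum_choice_invariant_imp_eq[OF assms(2)[folded KS_def] _ _ _ R_nonempty _ _ assms(3) invariant']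
        ch by blast
    then show ?thesis by simp
  qed simp
  then have "infsum (\<lambda>\<sigma>. \<mu> \<sigma> * G \<sigma>) UNIV = infsum (\<lambda>k. fibre_mass K \<mu> k * G (ch k)) UNIV"
    using infsum_mult_fibre_fun[of \<mu> "\<lambda>k. G (ch k)" K] by simp
  also have "\<dots> = (\<Sum>k\<in>KS. fibre_mass K \<mu> k * G (ch k))"
    using assms(2) by (intro infsum_ennreal_finite_support) (auto simp: KS_def)
  also have "\<dots> = T" using invariant'[OF ch] .
  finally show ?thesis .
qed

lemma finite_support_witness:
  fixes \<mu> :: "'a sd" and G :: "'a \<Rightarrow> ennreal"
  assumes "subdist \<mu>" and "osat \<mu> \<phi>" and "\<forall>\<sigma>. G \<sigma> < top"
    and "infsum (\<lambda>\<sigma>. \<mu> \<sigma> * G \<sigma>) UNIV \<noteq> T"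
  obtains \<mu>' where "subdist \<mu>'" and "finite {\<sigma>. \<mu>' \<sigma> \<noteq> 0}" and "osat \<mu>' \<phi>"
    and "infsum (\<lambda>\<sigma>. \<mu>' \<sigma> * G \<sigma>) UNIV \<noteq> T"
proof -
  define K where "K \<sigma> = map (\<lambda>B. B \<sigma>) (oassn_preds \<phi>)" for \<sigma>
  define KS where "KS = {k. fibre_mass K \<mu> k \<noteq> 0}"
  have "KS \<subseteq> range K"
    by (auto simp: KS_def fibre_mass_eq_0_iff)
  also have "range K \<subseteq> {xs. set xs \<subseteq> UNIV \<and> length xs = length (oassn_preds \<phi>)}"
    by (auto simp: K_def)
  finally have "finite KS"
    by (rule finite_subset) (rule finite_lists_length_eq, simp)
  then obtain ch where "\<And>k. fibre_mass K \<mu> k \<noteq> 0 \<Longrightarrow> K (ch k) = k \<and> \<mu> (ch k) \<noteq> 0"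
    and ch_sum: "(\<Sum>k\<in>KS. fibre_mass K \<mu> k * G (ch k)) \<noteq> T"
    using infsum_eq_if_choice_invariant[OF \<open>subdist \<mu>\<close> _ assms(3)] assms(4) unfolding KS_def by blast
  then have ch: "\<forall>k. fibre_mass K \<mu> k \<noteq> 0 \<longrightarrow> K (ch k) = k"
    by blast
  have preds_invariant: "\<forall>B\<in>set (oassn_preds \<phi>). \<forall>\<sigma> \<tau>. K \<sigma> = K \<tau> \<longrightarrow> B \<sigma> = B \<tau>"
    by (auto simp: K_def)
  have "subdist (concentrate K \<mu> ch)"
    by (rule subdist_concentrate[OF ch \<open>subdist \<mu>\<close>])
  moreover have "finite {\<sigma>. concentrate K \<mu> ch \<sigma> \<noteq> 0}"
    using finite_subset[OF support_concentrate finite_imageI] \<open>finite KS\<close> by (simp add: KS_def)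
  moreover have "osat (concentrate K \<mu> ch) \<phi>"
    using osat_fibre_invariant[OF preds_invariant \<open>subdist \<mu>\<close> calculation(1)]
      fibre_mass_concentrate[OF ch] \<open>osat \<mu> \<phi>\<close> by simp
  moreover have "infsum (\<lambda>\<sigma>. concentrate K \<mu> ch \<sigma> * G \<sigma>) UNIV \<noteq> T"
    using infsum_concentrate[OF ch] \<open>finite KS\<close> ch_sum by (simp add: KS_def)
  ultimately show ?thesis by (rule that)
qed

lemma finite_support_definable:
  assumes "finite {\<sigma>. \<mu> \<sigma> \<noteq> 0}" and "subdist \<mu>"
  obtains \<psi> where "\<And>m. subdist m \<Longrightarrow> osat m \<psi> \<longleftrightarrow> m = \<mu>"
proof -
  obtain xs where "distinct xs" and xs: "set xs = {\<sigma>. \<mu> \<sigma> \<noteq> 0}"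
    using finite_distinct_list[OF assms(1)] by blast
  have finite_mass: "\<mu> x \<noteq> top" for x
    using infsum_ennreal_single_le[of \<mu> x] \<open>subdist \<mu>\<close> by (auto simp: subdist_def mass_def top_unique)
  define \<psi> where "\<psi> = big_oplus (map (\<lambda>x. OProb (\<lambda>\<sigma>. \<sigma> = x) (enn2real (\<mu> x))) xs)"
  have "osat m \<psi> \<longleftrightarrow> m = \<mu>" if "subdist m" for m
  proof -
    have "osat m \<psi> \<longleftrightarrow> (\<forall>\<sigma>. m \<sigma> \<noteq> 0 \<longrightarrow> \<mu> \<sigma> \<noteq> 0) \<and> (\<forall>x. \<mu> x \<noteq> 0 \<longrightarrow> m x = \<mu> x)"
      unfolding \<psi>_def using osat_big_oplus_disjoint[OF \<open>distinct xs\<close> _ that] xs finite_mass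
      by (simp add: mass_point_srestr ennreal_enn2real_if)
    also have "\<dots> \<longleftrightarrow> m = \<mu>"
      by (metis ext)
    finally show ?thesis .
  qed
  then show ?thesis using that by blast
qed

lemma subdist_sbind_sem: "terminating C \<Longrightarrow> subdist \<mu> \<Longrightarrow> subdist (sbind \<mu> (sem C))"
  using subdist_sbind mass_sem_le by blast

lemma finite_support_counterexample:
  assumes "terminating C"
    and disj: "\<forall>i\<in>{1..n}. \<forall>j\<in>{1..n}. i \<noteq> j \<longrightarrow> (\<forall>\<sigma>. \<not> (A i \<sigma> \<and> A j \<sigma>))"
    and p: "\<forall>i\<in>{1..n}. 0 \<le> p i"
    and "\<not> ol_valid \<phi> C (big_oplus (map (\<lambda>i. OProb (A i) (p i)) [1..<n+1]))"
  obtains \<mu> where "subdist \<mu>" and "finite {\<sigma>. \<mu> \<sigma> \<noteq> 0}" and "osat \<mu> \<phi>"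
    and "\<not> osat (sbind \<mu> (sem C)) (big_oplus (map (\<lambda>i. OProb (A i) (p i)) [1..<n+1]))"
proof -
  note out_iff = osat_family_iff_partition_masses[OF disj p subdist_sbind_sem[OF \<open>terminating C\<close>]]
  obtain \<mu> where "subdist \<mu>" and "osat \<mu> \<phi>"
    and fails: "\<not> osat (sbind \<mu> (sem C)) (big_oplus (map (\<lambda>i. OProb (A i) (p i)) [1..<n+1]))"
    using assms(4) by (auto simp: ol_valid_def)
  obtain i where "i \<in> {0..n}"
    and bad_cell: "mass (srestr (sbind \<mu> (sem C)) (partition_cell A n i)) \<noteq> (if i = 0 then 0 else ennreal (p i))"
    using fails out_iff[OF \<open>subdist \<mu>\<close>] by blast
  define G where "G \<sigma> = mass (srestr (sem C \<sigma>) (partition_cell A n i))" for \<sigma>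
  have G_finite: "\<forall>\<sigma>. G \<sigma> < top"
  proof
    fix \<sigma>
    have "G \<sigma> \<le> 1"
      unfolding G_def using mass_srestr_le mass_sem_le[OF \<open>terminating C\<close>] by (rule order_trans)
    then show "G \<sigma> < top" using ennreal_one_less_top by (rule le_less_trans)
  qed
  have cell_mass: "mass (srestr (sbind m (sem C)) (partition_cell A n i)) = infsum (\<lambda>\<sigma>. m \<sigma> * G \<sigma>) UNIV" for m
    by (simp add: mass_srestr_sbind G_def)
  obtain \<mu>' where "subdist \<mu>'" and "finite {\<sigma>. \<mu>' \<sigma> \<noteq> 0}" and "osat \<mu>' \<phi>"
    and bad_cell': "infsum (\<lambda>\<sigma>. \<mu>' \<sigma> * G \<sigma>) UNIV \<noteq> (if i = 0 then 0 else ennreal (p i))"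
    by (rule finite_support_witness[OF \<open>subdist \<mu>\<close> \<open>osat \<mu> \<phi>\<close> G_finite bad_cell[unfolded cell_mass]])
  have "\<not> osat (sbind \<mu>' (sem C)) (big_oplus (map (\<lambda>i. OProb (A i) (p i)) [1..<n+1]))"
    using out_iff[OF \<open>subdist \<mu>'\<close>] \<open>i \<in> {0..n}\<close> bad_cell'[folded cell_mass] by blast
  with \<open>subdist \<mu>'\<close> \<open>finite {\<sigma>. \<mu>' \<sigma> \<noteq> 0}\<close> \<open>osat \<mu>' \<phi>\<close> show thesis by (rule that)
qed

lemma refuting_precondition_if_invalid:
  assumes "terminating C"
    and disj: "\<forall>i\<in>{1..n}. \<forall>j\<in>{1..n}. i \<noteq> j \<longrightarrow> (\<forall>\<sigma>. \<not> (A i \<sigma> \<and> A j \<sigma>))"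
    and p: "\<forall>i\<in>{1..n}. 0 \<le> p i"
    and "\<not> ol_valid \<phi> C (big_oplus (map (\<lambda>i. OProb (A i) (p i)) [1..<n+1]))"
  shows "\<exists>q \<phi>'. (\<forall>i\<in>{0..n}. 0 \<le> q i \<and> q i \<le> 1) \<and> oentails \<phi>' \<phi> \<and> satisfiable \<phi>'
    \<and> ol_valid \<phi>' C (big_oplus (map (\<lambda>i. OProb (partition_cell A n i) (q i)) [0..<n+1]))
    \<and> (q 0 \<noteq> 0 \<or> (\<exists>i\<in>{1..n}. q i \<noteq> p i))"
proof -
  obtain \<mu> where "subdist \<mu>" and "finite {\<sigma>. \<mu> \<sigma> \<noteq> 0}" and "osat \<mu> \<phi>"
    and fails: "\<not> osat (sbind \<mu> (sem C)) (big_oplus (map (\<lambda>i. OProb (A i) (p i)) [1..<n+1]))"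
    by (rule finite_support_counterexample[OF assms])
  obtain \<psi> where \<psi>: "\<And>m. subdist m \<Longrightarrow> osat m \<psi> \<longleftrightarrow> m = \<mu>"
    using finite_support_definable[OF \<open>finite {\<sigma>. \<mu> \<sigma> \<noteq> 0}\<close> \<open>subdist \<mu>\<close>] by blast
  define \<nu> where "\<nu> = sbind \<mu> (sem C)"
  have "subdist \<nu>"
    unfolding \<nu>_def using \<open>terminating C\<close> \<open>subdist \<mu>\<close> by (rule subdist_sbind_sem)
  define q where "q i = enn2real (mass (srestr \<nu> (partition_cell A n i)))" for i
  have cell_le_1: "mass (srestr \<nu> (partition_cell A n i)) \<le> 1" for i
    using mass_srestr_le \<open>subdist \<nu>\<close> unfolding subdist_def by (rule order_trans)
  then have cell_mass: "mass (srestr \<nu> (partition_cell A n i)) = ennreal (q i)" for i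
    unfolding q_def using ennreal_one_less_top by (metis ennreal_enn2real le_less_trans)
  have q_range: "\<forall>i\<in>{0..n}. 0 \<le> q i \<and> q i \<le> 1"
    using cell_le_1 by (simp add: q_def enn2real_leI)
  have "ol_valid (OAnd \<phi> \<psi>) C (big_oplus (map (\<lambda>i. OProb (partition_cell A n i) (q i)) [0..<n+1]))"
    unfolding ol_valid_def
  proof (intro allI impI)
    fix m assume "subdist m" and "osat m (OAnd \<phi> \<psi>)"
    then have "sbind m (sem C) = \<nu>" using \<psi> by (simp add: \<nu>_def)
    then show "osat (sbind m (sem C)) (big_oplus (map (\<lambda>i. OProb (partition_cell A n i) (q i)) [0..<n+1]))"
      using osat_partition_cells_iff[OF disj \<open>subdist \<nu>\<close>] cell_mass q_range by simp
  qed
  moreover have "q 0 \<noteq> 0 \<or> (\<exists>i\<in>{1..n}. q i \<noteq> p i)"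
  proof (rule ccontr)
    assume "\<not> ?thesis"
    then have "\<forall>i\<in>{0..n}. mass (srestr \<nu> (partition_cell A n i)) = (if i = 0 then 0 else ennreal (p i))"
      by (simp add: cell_mass)
    then show False
      using fails osat_family_iff_partition_masses[OF disj p \<open>subdist \<nu>\<close>] unfolding \<nu>_def by blast
  qed
  moreover have "oentails (OAnd \<phi> \<psi>) \<phi>" and "satisfiable (OAnd \<phi> \<psi>)"
    using \<open>subdist \<mu>\<close> \<open>osat \<mu> \<phi>\<close> \<psi> by (auto simp: oentails_def satisfiable_def)
  ultimately show ?thesis using q_range by blast
qed

lemma invalid_if_refuting_precondition:
  assumes "terminating C"
    and disj: "\<forall>i\<in>{1..n}. \<forall>j\<in>{1..n}. i \<noteq> j \<longrightarrow> (\<forall>\<sigma>. \<not> (A i \<sigma> \<and> A j \<sigma>))"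
    and p: "\<forall>i\<in>{1..n}. 0 \<le> p i" and q: "\<forall>i\<in>{0..n}. 0 \<le> q i"
    and "oentails \<phi>' \<phi>" and "satisfiable \<phi>'"
    and valid': "ol_valid \<phi>' C (big_oplus (map (\<lambda>i. OProb (partition_cell A n i) (q i)) [0..<n+1]))"
    and differs: "q 0 \<noteq> 0 \<or> (\<exists>i\<in>{1..n}. q i \<noteq> p i)"
  shows "\<not> ol_valid \<phi> C (big_oplus (map (\<lambda>i. OProb (A i) (p i)) [1..<n+1]))"
proof
  assume valid: "ol_valid \<phi> C (big_oplus (map (\<lambda>i. OProb (A i) (p i)) [1..<n+1]))"
  obtain \<mu> where "subdist \<mu>" and "osat \<mu> \<phi>'"
    using \<open>satisfiable \<phi>'\<close> by (auto simp: satisfiable_def)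
  then have "osat \<mu> \<phi>" using \<open>oentails \<phi>' \<phi>\<close> by (simp add: oentails_def)
  define \<nu> where "\<nu> = sbind \<mu> (sem C)"
  have "subdist \<nu>"
    unfolding \<nu>_def using \<open>terminating C\<close> \<open>subdist \<mu>\<close> by (rule subdist_sbind_sem)
  have "osat \<nu> (big_oplus (map (\<lambda>i. OProb (partition_cell A n i) (q i)) [0..<n+1]))"
    using valid' \<open>subdist \<mu>\<close> \<open>osat \<mu> \<phi>'\<close> unfolding ol_valid_def \<nu>_def by blast
  then have "\<forall>i\<in>{0..n}. mass (srestr \<nu> (partition_cell A n i)) = ennreal (q i)"
    using osat_partition_cells_iff[OF disj \<open>subdist \<nu>\<close>] by blast
  moreover have "osat \<nu> (big_oplus (map (\<lambda>i. OProb (A i) (p i)) [1..<n+1]))"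
    using valid \<open>subdist \<mu>\<close> \<open>osat \<mu> \<phi>\<close> unfolding ol_valid_def \<nu>_def by blast
  then have "\<forall>i\<in>{0..n}. mass (srestr \<nu> (partition_cell A n i)) = (if i = 0 then 0 else ennreal (p i))"
    using osat_family_iff_partition_masses[OF disj p \<open>subdist \<nu>\<close>] by blast
  ultimately have same: "ennreal (q i) = (if i = 0 then 0 else ennreal (p i))" if "i \<in> {0..n}" for i
    using that by simp
  have "q 0 = 0"
    using same[of 0] q by simp
  moreover have "q i = p i" if "i \<in> {1..n}" for i
    using same[of i] that p q by simp
  ultimately show False using differs by blast
qed

theorem theorem5p10:
  fixes C :: "('x,'v) cmd" and \<phi> :: "('x,'v) state oassn"
    and A :: "nat \<Rightarrow> ('x,'v) state \<Rightarrow> bool" and p :: "nat \<Rightarrow> real" and n :: nat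
  assumes "wf_cmd C" and "terminating C"
    and "\<forall>i\<in>{1..n}. \<forall>j\<in>{1..n}. i \<noteq> j \<longrightarrow> (\<forall>\<sigma>. \<not> (A i \<sigma> \<and> A j \<sigma>))"
    and "\<forall>i\<in>{1..n}. 0 \<le> p i \<and> p i \<le> 1"
  shows "(\<not> ol_valid \<phi> C (big_oplus (map (\<lambda>i. OProb (A i) (p i)) [1..<n+1])))
     \<longleftrightarrow> (\<exists>q :: nat \<Rightarrow> real. \<exists>\<phi>'. (\<forall>i\<in>{0..n}. 0 \<le> q i \<and> q i \<le> 1)
            \<and> oentails \<phi>' \<phi> \<and> satisfiable \<phi>'
            \<and> ol_valid \<phi>' C (big_oplus (map (\<lambda>i. OProb
                  (if i = 0 then (\<lambda>\<sigma>. \<forall>j\<in>{1..n}. \<not> A j \<sigma>) else A i) (q i)) [0..<n+1]))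
            \<and> (q 0 \<noteq> 0 \<or> (\<exists>i\<in>{1..n}. q i \<noteq> p i)))"
proof -
  have p: "\<forall>i\<in>{1..n}. 0 \<le> p i" using assms(4) by simp
  show ?thesis
    unfolding partition_cell_def[symmetric]
    using refuting_precondition_if_invalid[OF assms(2,3) p]
      invalid_if_refuting_precondition[OF assms(2,3) p] by blast
qed

end
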